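(* Let $G$ be a trigraph containing a fence gadget $F$ attached to a set $S$ and satisfying the attachment rule in $G$ with set $X$, and let $Y=V(G)\setminus(V(F)\cup S\cup X)$. Let $G'$ be any trigraph of a partial $4$-sequence from $G$ such that $S$ is not contained in a single part of $G'$. Then (i) no part of $G'$ intersects both $S$ and $V(G)\setminus S$, and (ii) no part of $G'$ intersects both $X$ and $Y$.
   Context: A trigraph $G$ consists of a vertex set $V(G)$ and two disjoint sets of unordered pairs of distinct vertices: black edges and red edges; the red graph is formed by the red edges. Contracting two distinct vertices $u,v$ replaces them by a new vertex $w$ such that, for every other vertex $z$, $wz$ is black if $uz,vz$ are both black, a non-edge if both are non-edges, and red otherwise. A partial $d$-sequence from $G$ is a sequence of trigraphs starting at $G$, each obtained from the previous by one contraction, all of maximum red degree at most $d$. Each vertex $u$ of a later trigraph $G'$ corresponds to the set $u(G)$ of vertices of $G$ merged into it; these sets are the parts of $G'$. A fence gadget is a trigraph $F$ on $A\cup B$, $A=\{a_1,\dots,a_6\}$, $B=\{b_1,\dots,b_6\}$, whose black edges are those of the cycles $a_1a_2a_3a_4a_5a_6a_1$ and $b_1b_2b_3b_4b_5b_6b_1$ together with $b_1a_6$, and whose red edges are $a_ib_i$ for $i\in[6]$ and $a_ib_{i+1}$ for $i\in[5]$. Inside a trigraph $G$, $F$ is attached to a nonempty set $S\subseteq V(G)\setminus V(F)$ if every vertex of $A$ is joined by a black edge to every vertex of $S$ and no vertex of $B$ is adjacent to a vertex of $S$. $F$ satisfies the attachment rule in $G$ if $V(F)$ is the vertex set of a connected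 component of the red graph of $G$ and there is a set $X\subseteq V(G)\setminus(V(F)\cup S)$ such that every vertex of $A$ has exactly $X\cup S$ as its set of neighbours outside $V(F)$, every vertex of $B$ has exactly $X$ as its set of neighbours outside $V(F)$ (all these edges black), and every vertex of $X$ is adjacent to every vertex of $S$. *)

theory Defs
  imports Main
begin

record 'v trigraph =
  verts :: "'v set"
  blk   :: "'v set set"
  red   :: "'v set set"

definition pairs_on :: "'v set \<Rightarrow> 'v set set" where
  "pairs_on V = {{x, y} | x y. x \<in> V \<and> y \<in> V \<and> x \<noteq> y}"

definition wf_trigraph :: "('v, 'b) trigraph_scheme \<Rightarrow> bool" where
  "wf_trigraph G \<longleftrightarrow> finite (verts G) \<and> blk G \<subseteq> pairs_on (verts G)
     \<and> red G \<subseteq> pairs_on (verts G) \<and> blk G \<inter> red G = {}"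

definition red_deg :: "'v trigraph \<Rightarrow> 'v \<Rightarrow> nat" where
  "red_deg G x = card {y \<in> verts G. {x, y} \<in> red G}"

definition max_red_deg_le :: "'v trigraph \<Rightarrow> nat \<Rightarrow> bool" where
  "max_red_deg_le G d \<longleftrightarrow> (\<forall>x \<in> verts G. red_deg G x \<le> d)"

text \<open>Trigraphs in a contraction sequence from G are represented with their
vertices being the parts (the sets of vertices of G merged into them).\<close>

definition lift :: "'v trigraph \<Rightarrow> 'v set trigraph" where
  "lift G = \<lparr> verts = (\<lambda>v. {v}) ` verts G,
             blk = (\<lambda>e. (\<lambda>v. {v}) ` e) ` blk G,
             red = (\<lambda>e. (\<lambda>v. {v}) ` e) ` red G \<rparr>"

definition contract :: "'v set trigraph \<Rightarrow> 'v set \<Rightarrow> 'v set \<Rightarrow> 'v set trigraph" where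
  "contract G u v =
     (let w = u \<union> v; Z = verts G - {u, v} in
      \<lparr> verts = Z \<union> {w},
        blk = {e \<in> blk G. u \<notin> e \<and> v \<notin> e}
              \<union> {{w, z} | z. z \<in> Z \<and> {u, z} \<in> blk G \<and> {v, z} \<in> blk G},
        red = {e \<in> red G. u \<notin> e \<and> v \<notin> e}
              \<union> {{w, z} | z. z \<in> Z \<and> \<not> ({u, z} \<in> blk G \<and> {v, z} \<in> blk G)
                     \<and> ({u, z} \<in> blk G \<union> red G \<or> {v, z} \<in> blk G \<union> red G)} \<rparr>)"

definition partial_seq :: "nat \<Rightarrow> 'v trigraph \<Rightarrow> 'v set trigraph list \<Rightarrow> bool" where
  "partial_seq d G Gs \<longleftrightarrow>
     Gs \<noteq> [] \<and> hd Gs = lift G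
     \<and> (\<forall>i. Suc i < length Gs \<longrightarrow>
          (\<exists>u \<in> verts (Gs ! i). \<exists>v \<in> verts (Gs ! i). u \<noteq> v
              \<and> Gs ! Suc i = contract (Gs ! i) u v))
     \<and> (\<forall>H \<in> set Gs. max_red_deg_le H d)"

definition adj :: "'v trigraph \<Rightarrow> 'v \<Rightarrow> 'v \<Rightarrow> bool" where
  "adj G x y \<longleftrightarrow> {x, y} \<in> blk G \<union> red G"

definition neighbours :: "'v trigraph \<Rightarrow> 'v \<Rightarrow> 'v set" where
  "neighbours G x = {y \<in> verts G. adj G x y}"

definition fence_black :: "(nat \<Rightarrow> 'v) \<Rightarrow> (nat \<Rightarrow> 'v) \<Rightarrow> 'v set set" where
  "fence_black a b =
     {{a i, a (Suc i)} | i. i \<in> {1..5}} \<union> {{a 6, a 1}}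
     \<union> {{b i, b (Suc i)} | i. i \<in> {1..5}} \<union> {{b 6, b 1}}
     \<union> {{b 1, a 6}}"

definition fence_red :: "(nat \<Rightarrow> 'v) \<Rightarrow> (nat \<Rightarrow> 'v) \<Rightarrow> 'v set set" where
  "fence_red a b =
     {{a i, b i} | i. i \<in> {1..6}} \<union> {{a i, b (Suc i)} | i. i \<in> {1..5}}"

definition fence_vs :: "(nat \<Rightarrow> 'v) \<Rightarrow> (nat \<Rightarrow> 'v) \<Rightarrow> 'v set" where
  "fence_vs a b = a ` {1..6} \<union> b ` {1..6}"

definition contains_fence :: "'v trigraph \<Rightarrow> (nat \<Rightarrow> 'v) \<Rightarrow> (nat \<Rightarrow> 'v) \<Rightarrow> bool" where
  "contains_fence G a b \<longleftrightarrow>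
     inj_on a {1..6} \<and> inj_on b {1..6} \<and> a ` {1..6} \<inter> b ` {1..6} = {}
     \<and> fence_vs a b \<subseteq> verts G
     \<and> {e \<in> blk G. e \<subseteq> fence_vs a b} = fence_black a b
     \<and> {e \<in> red G. e \<subseteq> fence_vs a b} = fence_red a b"

definition attached :: "'v trigraph \<Rightarrow> (nat \<Rightarrow> 'v) \<Rightarrow> (nat \<Rightarrow> 'v) \<Rightarrow> 'v set \<Rightarrow> bool" where
  "attached G a b S \<longleftrightarrow>
     S \<noteq> {} \<and> S \<subseteq> verts G - fence_vs a b
     \<and> (\<forall>i \<in> {1..6}. \<forall>s \<in> S. {a i, s} \<in> blk G)
     \<and> (\<forall>i \<in> {1..6}. \<forall>s \<in> S. \<not> adj G (b i) s)"

definition red_rel :: "'v trigraph \<Rightarrow> ('v \<times> 'v) set" where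
  "red_rel G = {(x, y). {x, y} \<in> red G}"

definition red_component :: "'v trigraph \<Rightarrow> 'v set \<Rightarrow> bool" where
  "red_component G C \<longleftrightarrow> C \<noteq> {} \<and> C \<subseteq> verts G
     \<and> (\<forall>x \<in> C. {y \<in> verts G. (x, y) \<in> (red_rel G)\<^sup>*} = C)"

definition attachment_rule ::
  "'v trigraph \<Rightarrow> (nat \<Rightarrow> 'v) \<Rightarrow> (nat \<Rightarrow> 'v) \<Rightarrow> 'v set \<Rightarrow> 'v set \<Rightarrow> bool" where
  "attachment_rule G a b S X \<longleftrightarrow>
     red_component G (fence_vs a b)
     \<and> X \<subseteq> verts G - (fence_vs a b \<union> S)
     \<and> (\<forall>i \<in> {1..6}. neighbours G (a i) - fence_vs a b = X \<union> S
          \<and> (\<forall>y \<in> X \<union> S. {a i, y} \<in> blk G))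
     \<and> (\<forall>i \<in> {1..6}. neighbours G (b i) - fence_vs a b = X
          \<and> (\<forall>y \<in> X. {b i, y} \<in> blk G))
     \<and> (\<forall>x \<in> X. \<forall>s \<in> S. adj G x s)"

end

theory Submission
  imports Defs "HOL-Library.Disjoint_Sets"
begin

text \<open>
  Every trigraph of a contraction sequence from \<open>G\<close> is the quotient of \<open>G\<close> by the partition
  into parts: two parts are joined by a black edge if all pairs between them are black, and by
  a red edge unless they are all black or all non-adjacent. Hence the part of a vertex \<open>z\<close> is a
  red neighbour of a part \<open>W\<close> not containing \<open>z\<close> as soon as \<open>W\<close> distinguishes \<open>z\<close>, i.e. contains a vertex
  adjacent to \<open>z\<close> and a vertex not black to \<open>z\<close>.

  Call a part tame if it lies inside \<open>S\<close>, inside \<open>X\<close>, or inside \<open>Y\<close> together with at most one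
  fence vertex; tame parts satisfy (i) and (ii), and all singletons are tame. While \<open>S\<close> is not
  inside one part, contracting two tame parts into an untame part \<open>W\<close> creates red degree at
  least 5: if \<open>W\<close> has no fence vertex it meets two of \<open>S\<close>, \<open>X\<close>, \<open>Y\<close>, and then \<open>W\<close> distinguishes
  all six \<open>a\<^sub>i\<close> or all six \<open>b\<^sub>i\<close>; if it has one fence vertex it also meets \<open>S\<close> or \<open>X\<close>; if it has
  two, it lies in \<open>Y\<close> apart from them. In each case the adjacencies inside the twelve-vertex
  gadget (checked by simplification) and the attachment rule give at least five vertices
  distinguished by \<open>W\<close> in pairwise distinct parts; when the two fence vertices lie on opposite
  sides, two of these are vertices of \<open>S\<close> from different parts. So in a partial 4-sequence all
  parts stay tame.
\<close>

section \<open>Trigraphs of a contraction sequence as quotients\<close>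

definition all_black :: "'v trigraph \<Rightarrow> 'v set \<Rightarrow> 'v set \<Rightarrow> bool" where
  "all_black G P Q \<longleftrightarrow> (\<forall>p\<in>P. \<forall>q\<in>Q. {p, q} \<in> blk G)"

definition no_adj :: "'v trigraph \<Rightarrow> 'v set \<Rightarrow> 'v set \<Rightarrow> bool" where
  "no_adj G P Q \<longleftrightarrow> (\<forall>p\<in>P. \<forall>q\<in>Q. \<not> adj G p q)"

definition quotient_trigraph :: "'v trigraph \<Rightarrow> 'v set set \<Rightarrow> 'v set trigraph" where
  "quotient_trigraph G \<P> =
     \<lparr>verts = \<P>,
      blk = {{P, Q} | P Q. P \<in> \<P> \<and> Q \<in> \<P> \<and> P \<noteq> Q \<and> all_black G P Q},
      red = {{P, Q} | P Q. P \<in> \<P> \<and> Q \<in> \<P> \<and> P \<noteq> Q \<and> \<not> all_black G P Q \<and> \<not> no_adj G P Q}\<rparr>"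

lemma adj_commute: "adj G x y \<longleftrightarrow> adj G y x"
  by (simp add: adj_def insert_commute)

lemma all_black_commute: "all_black G P Q \<longleftrightarrow> all_black G Q P"
  unfolding all_black_def by (subst insert_commute) blast

lemma no_adj_commute: "no_adj G P Q \<longleftrightarrow> no_adj G Q P"
  unfolding no_adj_def adj_def by (subst insert_commute) blast

lemma all_black_Un: "all_black G (P \<union> P') Q \<longleftrightarrow> all_black G P Q \<and> all_black G P' Q"
  unfolding all_black_def by blast

lemma no_adj_Un: "no_adj G (P \<union> P') Q \<longleftrightarrow> no_adj G P Q \<and> no_adj G P' Q"
  unfolding no_adj_def by blast

lemma all_black_imp_not_no_adj: "P \<noteq> {} \<Longrightarrow> Q \<noteq> {} \<Longrightarrow> all_black G P Q \<Longrightarrow> \<not> no_adj G P Q"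
  unfolding all_black_def no_adj_def adj_def by blast

lemma doubleton_mem_symmetric_pairs:
  assumes "\<And>x y. C x y \<Longrightarrow> C y x"
  shows "{P, Q} \<in> {{x, y} | x y. C x y} \<longleftrightarrow> C P Q"
  using assms by (auto simp: doubleton_eq_iff)

lemma doubleton_in_blk_quotient_trigraph:
  "{P, Q} \<in> blk (quotient_trigraph G \<P>) \<longleftrightarrow> P \<in> \<P> \<and> Q \<in> \<P> \<and> P \<noteq> Q \<and> all_black G P Q"
  unfolding quotient_trigraph_def trigraph.simps
  by (rule doubleton_mem_symmetric_pairs) (use all_black_commute in blast)

lemma doubleton_in_red_quotient_trigraph:
  "{P, Q} \<in> red (quotient_trigraph G \<P>) \<longleftrightarrow>
     P \<in> \<P> \<and> Q \<in> \<P> \<and> P \<noteq> Q \<and> \<not> all_black G P Q \<and> \<not> no_adj G P Q"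
  unfolding quotient_trigraph_def trigraph.simps
  by (rule doubleton_mem_symmetric_pairs) (use all_black_commute no_adj_commute in blast)

lemma verts_quotient_trigraph [simp]: "verts (quotient_trigraph G \<P>) = \<P>"
  by (simp add: quotient_trigraph_def)

lemma blk_quotient_trigraph_iff:
  "e \<in> blk (quotient_trigraph G \<P>) \<longleftrightarrow> (\<exists>P\<in>\<P>. \<exists>Q\<in>\<P>. P \<noteq> Q \<and> e = {P, Q} \<and> all_black G P Q)"
  unfolding quotient_trigraph_def by auto

lemma red_quotient_trigraph_iff:
  "e \<in> red (quotient_trigraph G \<P>) \<longleftrightarrow>
     (\<exists>P\<in>\<P>. \<exists>Q\<in>\<P>. P \<noteq> Q \<and> e = {P, Q} \<and> \<not> all_black G P Q \<and> \<not> no_adj G P Q)"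
  unfolding quotient_trigraph_def by auto

lemma lift_eq_quotient_trigraph:
  assumes "wf_trigraph G"
  shows "lift G = quotient_trigraph G ((\<lambda>v. {v}) ` verts G)"
proof -
  have edges: "blk G \<subseteq> pairs_on (verts G)" "red G \<subseteq> pairs_on (verts G)" "blk G \<inter> red G = {}"
    using assms unfolding wf_trigraph_def by auto
  let ?Q = "quotient_trigraph G ((\<lambda>v. {v}) ` verts G)"
  have "e \<in> blk (lift G) \<longleftrightarrow> e \<in> blk ?Q" for e
  proof
    assume "e \<in> blk (lift G)"
    then obtain p q where "{p, q} \<in> blk G" "e = {{p}, {q}}" "p \<in> verts G" "q \<in> verts G" "p \<noteq> q"
      using edges(1) unfolding lift_def pairs_on_def by auto
    then show "e \<in> blk ?Q"
      by (simp add: doubleton_in_blk_quotient_trigraph all_black_def)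
  next
    assume "e \<in> blk ?Q"
    then obtain p q where "{p, q} \<in> blk G" "e = {{p}, {q}}"
      unfolding quotient_trigraph_def all_black_def by auto
    then show "e \<in> blk (lift G)"
      unfolding lift_def by (auto intro!: image_eqI[where x = "{p, q}"])
  qed
  moreover have "e \<in> red (lift G) \<longleftrightarrow> e \<in> red ?Q" for e
  proof
    assume "e \<in> red (lift G)"
    then obtain p q where "{p, q} \<in> red G" "e = {{p}, {q}}" "p \<in> verts G" "q \<in> verts G" "p \<noteq> q"
      using edges(2) unfolding lift_def pairs_on_def by auto
    with edges(3) show "e \<in> red ?Q"
      by (auto simp: doubleton_in_red_quotient_trigraph all_black_def no_adj_def adj_def)
  next
    assume "e \<in> red ?Q"
    then obtain p q where "{p, q} \<in> red G" "e = {{p}, {q}}"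
      unfolding quotient_trigraph_def all_black_def no_adj_def adj_def by auto
    then show "e \<in> red (lift G)"
      unfolding lift_def by (auto intro!: image_eqI[where x = "{p, q}"])
  qed
  ultimately show ?thesis
    by (simp add: lift_def quotient_trigraph_def set_eq_iff)
qed

lemma partition_on_part_unique:
  assumes "partition_on A \<P>" "P \<in> \<P>" "Q \<in> \<P>" "x \<in> P" "x \<in> Q"
  shows "P = Q"
  using assms partition_onD2 disjointD by blast

lemma partition_on_merge:
  assumes "partition_on A \<P>" "u \<in> \<P>" "v \<in> \<P>" "u \<noteq> v"
  shows "partition_on A (\<P> - {u, v} \<union> {u \<union> v})"
  using assms unfolding partition_on_def disjoint_def by auto

lemma union_of_parts_notin_partition:
  assumes part: "partition_on A \<P>" and uv: "u \<in> \<P>" "v \<in> \<P>" "u \<noteq> v"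
  shows "u \<union> v \<notin> \<P>"
proof
  assume "u \<union> v \<in> \<P>"
  moreover have "u \<noteq> {}" "v \<noteq> {}"
    using uv partition_onD3[OF part] by blast+
  ultimately have "u \<union> v = u" "u \<union> v = v"
    using uv partition_on_part_unique[OF part] by blast+
  with uv(3) show False
    by blast
qed

lemma partition_on_split_witnesses:
  assumes part: "partition_on V \<P>" and A: "A \<subseteq> V" "A \<noteq> {}" and split: "\<not> (\<exists>P\<in>\<P>. A \<subseteq> P)"
  obtains x y where "x \<in> A" "y \<in> A" "\<And>P. P \<in> \<P> \<Longrightarrow> x \<in> P \<Longrightarrow> y \<notin> P"
proof -
  obtain x P where x: "x \<in> A" "P \<in> \<P>" "x \<in> P"
    using A partition_onD1[OF part] by blast
  moreover obtain y where "y \<in> A" "y \<notin> P"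
    using split x(2) by blast
  ultimately show thesis
    using that partition_on_part_unique[OF part] by metis
qed

lemma verts_contract: "verts (contract H u v) = verts H - {u, v} \<union> {u \<union> v}"
  by (simp add: contract_def Let_def)

lemma blk_contract:
  "e \<in> blk (contract H u v) \<longleftrightarrow> (e \<in> blk H \<and> u \<notin> e \<and> v \<notin> e)
     \<or> (\<exists>z \<in> verts H - {u, v}. e = {u \<union> v, z} \<and> {u, z} \<in> blk H \<and> {v, z} \<in> blk H)"
  by (auto simp: contract_def Let_def)

lemma red_contract:
  "e \<in> red (contract H u v) \<longleftrightarrow> (e \<in> red H \<and> u \<notin> e \<and> v \<notin> e)
     \<or> (\<exists>z \<in> verts H - {u, v}. e = {u \<union> v, z} \<and> \<not> ({u, z} \<in> blk H \<and> {v, z} \<in> blk H)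
          \<and> ({u, z} \<in> blk H \<union> red H \<or> {v, z} \<in> blk H \<union> red H))"
  by (auto simp: contract_def Let_def)

lemma adj_in_quotient_trigraph_iff:
  assumes part: "partition_on A \<P>" and PQ: "P \<in> \<P>" "Q \<in> \<P>" "P \<noteq> Q"
  shows "{P, Q} \<in> blk (quotient_trigraph G \<P>) \<union> red (quotient_trigraph G \<P>) \<longleftrightarrow> \<not> no_adj G P Q"
proof -
  have "P \<noteq> {}" "Q \<noteq> {}"
    using PQ partition_onD3[OF part] by blast+
  then show ?thesis
    using PQ all_black_imp_not_no_adj[of P Q G]
    by (auto simp: doubleton_in_blk_quotient_trigraph doubleton_in_red_quotient_trigraph)
qed

lemma blk_contract_quotient_trigraph:
  assumes part: "partition_on (verts G) \<P>" and uv: "u \<in> \<P>" "v \<in> \<P>" "u \<noteq> v"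
  shows "blk (contract (quotient_trigraph G \<P>) u v) =
    blk (quotient_trigraph G (\<P> - {u, v} \<union> {u \<union> v}))"
proof -
  define w Z where "w = u \<union> v" and "Z = \<P> - {u, v}"
  let ?H = "quotient_trigraph G \<P>"
  have "w \<notin> Z"
    using union_of_parts_notin_partition[OF part uv] unfolding w_def Z_def by blast
  have old: "e \<in> blk ?H \<and> u \<notin> e \<and> v \<notin> e \<longleftrightarrow>
      (\<exists>P\<in>Z. \<exists>Q\<in>Z. P \<noteq> Q \<and> e = {P, Q} \<and> all_black G P Q)" for e
    unfolding blk_quotient_trigraph_iff Z_def by blast
  have new: "{u, z} \<in> blk ?H \<and> {v, z} \<in> blk ?H \<longleftrightarrow> all_black G w z" if "z \<in> Z" for z
    using that uv unfolding Z_def w_def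
    by (auto simp: doubleton_in_blk_quotient_trigraph all_black_Un)
  have "e \<in> blk (contract ?H u v) \<longleftrightarrow> e \<in> blk (quotient_trigraph G (Z \<union> {w}))" for e
  proof -
    have "e \<in> blk (contract ?H u v) \<longleftrightarrow> (\<exists>P\<in>Z. \<exists>Q\<in>Z. P \<noteq> Q \<and> e = {P, Q} \<and> all_black G P Q)
        \<or> (\<exists>z\<in>Z. e = {w, z} \<and> all_black G w z)"
      unfolding blk_contract old verts_quotient_trigraph using new by (auto simp: w_def Z_def)
    also have "\<dots> \<longleftrightarrow> e \<in> blk (quotient_trigraph G (Z \<union> {w}))"
      unfolding blk_quotient_trigraph_iff using \<open>w \<notin> Z\<close>
      by (auto simp: insert_commute all_black_commute)
    finally show ?thesis .
  qed
  then show ?thesis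
    unfolding w_def Z_def by blast
qed

lemma red_contract_quotient_trigraph:
  assumes part: "partition_on (verts G) \<P>" and uv: "u \<in> \<P>" "v \<in> \<P>" "u \<noteq> v"
  shows "red (contract (quotient_trigraph G \<P>) u v) =
    red (quotient_trigraph G (\<P> - {u, v} \<union> {u \<union> v}))"
proof -
  define w Z where "w = u \<union> v" and "Z = \<P> - {u, v}"
  let ?H = "quotient_trigraph G \<P>"
  have "w \<notin> Z"
    using union_of_parts_notin_partition[OF part uv] unfolding w_def Z_def by blast
  have old: "e \<in> red ?H \<and> u \<notin> e \<and> v \<notin> e \<longleftrightarrow>
      (\<exists>P\<in>Z. \<exists>Q\<in>Z. P \<noteq> Q \<and> e = {P, Q} \<and> \<not> all_black G P Q \<and> \<not> no_adj G P Q)" for e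
    unfolding red_quotient_trigraph_iff Z_def by blast
  have new_black: "{u, z} \<in> blk ?H \<and> {v, z} \<in> blk ?H \<longleftrightarrow> all_black G w z" if "z \<in> Z" for z
    using that uv unfolding Z_def w_def
    by (auto simp: doubleton_in_blk_quotient_trigraph all_black_Un)
  have new_adj: "({u, z} \<in> blk ?H \<union> red ?H \<or> {v, z} \<in> blk ?H \<union> red ?H) \<longleftrightarrow> \<not> no_adj G w z"
    if "z \<in> Z" for z
    using that uv adj_in_quotient_trigraph_iff[OF part, of u z G]
      adj_in_quotient_trigraph_iff[OF part, of v z G]
    unfolding w_def Z_def no_adj_Un by blast
  have "e \<in> red (contract ?H u v) \<longleftrightarrow> e \<in> red (quotient_trigraph G (Z \<union> {w}))" for e
  proof -
    have "e \<in> red (contract ?H u v) \<longleftrightarrow>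
        (\<exists>P\<in>Z. \<exists>Q\<in>Z. P \<noteq> Q \<and> e = {P, Q} \<and> \<not> all_black G P Q \<and> \<not> no_adj G P Q)
        \<or> (\<exists>z\<in>Z. e = {w, z} \<and> \<not> all_black G w z \<and> \<not> no_adj G w z)"
      unfolding red_contract old verts_quotient_trigraph using new_black new_adj
      by (auto simp: w_def Z_def)
    also have "\<dots> \<longleftrightarrow> e \<in> red (quotient_trigraph G (Z \<union> {w}))"
      unfolding red_quotient_trigraph_iff using \<open>w \<notin> Z\<close>
      by (auto simp: insert_commute all_black_commute no_adj_commute)
    finally show ?thesis .
  qed
  then show ?thesis
    unfolding w_def Z_def by blast
qed

lemma contract_quotient_trigraph:
  assumes "partition_on (verts G) \<P>" "u \<in> \<P>" "v \<in> \<P>" "u \<noteq> v"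
  shows "contract (quotient_trigraph G \<P>) u v = quotient_trigraph G (\<P> - {u, v} \<union> {u \<union> v})"
  by (intro trigraph.equality)
    (simp_all add: verts_contract blk_contract_quotient_trigraph[OF assms]
      red_contract_quotient_trigraph[OF assms])

lemma partial_seq_hd: "partial_seq d G Gs \<Longrightarrow> Gs ! 0 = lift G"
  unfolding partial_seq_def by (metis hd_conv_nth)

lemma partial_seq_step:
  assumes seq: "partial_seq d G Gs" and i: "Suc i < length Gs"
    and part: "partition_on (verts G) \<P>" and Gi: "Gs ! i = quotient_trigraph G \<P>"
  obtains u v where "u \<in> \<P>" "v \<in> \<P>" "u \<noteq> v"
    "Gs ! Suc i = quotient_trigraph G (\<P> - {u, v} \<union> {u \<union> v})"
proof -
  have "\<exists>u\<in>verts (Gs ! i). \<exists>v\<in>verts (Gs ! i). u \<noteq> v \<and> Gs ! Suc i = contract (Gs ! i) u v"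
    using seq i unfolding partial_seq_def by blast
  then obtain u v where uv: "u \<in> \<P>" "v \<in> \<P>" "u \<noteq> v" "Gs ! Suc i = contract (Gs ! i) u v"
    using Gi by auto
  show thesis
    by (rule that[OF uv(1-3)]) (simp add: uv(4) Gi contract_quotient_trigraph[OF part uv(1-3)])
qed

lemma partial_seq_quotient_trigraph:
  assumes wf: "wf_trigraph G" and seq: "partial_seq d G Gs" and i: "i < length Gs"
  shows "\<exists>\<P>. partition_on (verts G) \<P> \<and> Gs ! i = quotient_trigraph G \<P>"
  using i
proof (induction i)
  case 0
  show ?case
    using partial_seq_hd[OF seq] lift_eq_quotient_trigraph[OF wf] partition_on_singletons by metis
next
  case (Suc i)
  then obtain \<P> where part: "partition_on (verts G) \<P>" and Gi: "Gs ! i = quotient_trigraph G \<P>"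
    by auto
  with Suc.prems show ?case
    using partial_seq_step[OF seq] partition_on_merge by metis
qed

section \<open>Red neighbours of a part\<close>

definition distinguishes :: "'v trigraph \<Rightarrow> 'v set \<Rightarrow> 'v \<Rightarrow> bool" where
  "distinguishes G W z \<longleftrightarrow> (\<exists>p\<in>W. adj G p z) \<and> (\<exists>p\<in>W. {p, z} \<notin> blk G)"

lemma distinguishes_mono: "distinguishes G W z \<Longrightarrow> W \<subseteq> W' \<Longrightarrow> distinguishes G W' z"
  unfolding distinguishes_def by blast

lemma distinguishes_doubleton:
  "distinguishes G {p, q} z \<longleftrightarrow> (adj G p z \<or> adj G q z) \<and> ({p, z} \<notin> blk G \<or> {q, z} \<notin> blk G)"
  unfolding distinguishes_def by blast

lemma distinguishesI:
  "p \<in> W \<Longrightarrow> adj G p z \<Longrightarrow> q \<in> W \<Longrightarrow> \<not> adj G q z \<or> {q, z} \<notin> blk G \<Longrightarrow> distinguishes G W z"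
  unfolding distinguishes_def adj_def by blast

lemma card_distinguished_le_red_deg:
  assumes part: "partition_on (verts G) \<P>" and fin: "finite (verts G)" and W: "W \<in> \<P>"
    and Z: "Z \<subseteq> verts G - W" "\<And>z. z \<in> Z \<Longrightarrow> distinguishes G W z"
    and sep: "\<And>P z z'. P \<in> \<P> \<Longrightarrow> z \<in> Z \<Longrightarrow> z' \<in> Z \<Longrightarrow> z \<in> P \<Longrightarrow> z' \<in> P \<Longrightarrow> z = z'"
  shows "card Z \<le> red_deg (quotient_trigraph G \<P>) W"
proof -
  define part_of where "part_of z = (SOME P. P \<in> \<P> \<and> z \<in> P)" for z
  have part_of: "part_of z \<in> \<P>" "z \<in> part_of z" if "z \<in> Z" for z
  proof -
    have "\<exists>P. P \<in> \<P> \<and> z \<in> P"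
      using that Z(1) partition_onD1[OF part] by blast
    then show "part_of z \<in> \<P>" "z \<in> part_of z"
      unfolding part_of_def by (metis (mono_tags, lifting) someI_ex)+
  qed
  have "inj_on part_of Z"
    by (rule inj_onI) (metis part_of sep)
  then have "card Z = card (part_of ` Z)"
    by (simp add: card_image)
  also have "\<dots> \<le> card {Q \<in> \<P>. {W, Q} \<in> red (quotient_trigraph G \<P>)}"
  proof (rule card_mono)
    show "finite {Q \<in> \<P>. {W, Q} \<in> red (quotient_trigraph G \<P>)}"
      using finite_elements[OF fin part] by simp
    show "part_of ` Z \<subseteq> {Q \<in> \<P>. {W, Q} \<in> red (quotient_trigraph G \<P>)}"
    proof clarify
      fix z assume z: "z \<in> Z"
      have "part_of z \<noteq> W"
        using part_of[OF z] z Z(1) by blast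
      moreover have "\<not> all_black G W (part_of z)" "\<not> no_adj G W (part_of z)"
        using Z(2)[OF z] part_of[OF z]
        unfolding distinguishes_def all_black_def no_adj_def by blast+
      ultimately show "part_of z \<in> \<P> \<and> {W, part_of z} \<in> red (quotient_trigraph G \<P>)"
        using part_of[OF z] W by (simp add: doubleton_in_red_quotient_trigraph)
    qed
  qed
  also have "\<dots> = red_deg (quotient_trigraph G \<P>) W"
    by (simp add: red_deg_def)
  finally show ?thesis .
qed

section \<open>The fence gadget on its index set\<close>

definition fence_vertex :: "(nat \<Rightarrow> 'v) \<Rightarrow> (nat \<Rightarrow> 'v) \<Rightarrow> bool \<times> nat \<Rightarrow> 'v" where
  "fence_vertex a b k = (if fst k then a (snd k) else b (snd k))"

definition fence_index :: "(bool \<times> nat) list" where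
  "fence_index = [(True, 1), (True, 2), (True, 3), (True, 4), (True, 5), (True, 6),
                  (False, 1), (False, 2), (False, 3), (False, 4), (False, 5), (False, 6)]"

lemma distinct_fence_index: "distinct fence_index"
  by (simp add: fence_index_def)

lemma interval_1_5: "{1..5::nat} = {1, 2, 3, 4, 5}"
  by auto

lemma interval_1_6: "{1..6::nat} = {1, 2, 3, 4, 5, 6}"
  by auto

lemma set_fence_index: "set fence_index = UNIV \<times> {1..6}"
  unfolding interval_1_6 UNIV_bool fence_index_def by (simp add: insert_commute)

lemma fence_vs_eq_image: "fence_vs a b = fence_vertex a b ` set fence_index"
  unfolding fence_vs_def set_fence_index by (force simp: fence_vertex_def)

lemma inj_on_fence_vertex:
  assumes "contains_fence G a b"
  shows "inj_on (fence_vertex a b) (set fence_index)"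
  using assms unfolding contains_fence_def inj_on_def set_fence_index fence_vertex_def
  by (auto split: if_splits)

lemma fence_black_comp: "fence_black (f \<circ> a) (f \<circ> b) = (`) f ` fence_black a b"
  unfolding fence_black_def setcompr_eq_image by (simp add: image_Un image_image)

lemma fence_red_comp: "fence_red (f \<circ> a) (f \<circ> b) = (`) f ` fence_red a b"
  unfolding fence_red_def setcompr_eq_image by (simp add: image_Un image_image)

lemma fence_vertex_comp_Pair:
  "fence_vertex a b \<circ> Pair True = a" "fence_vertex a b \<circ> Pair False = b"
  by (simp_all add: fun_eq_iff fence_vertex_def)

definition index_black :: "(bool \<times> nat) set set" where
  "index_black = fence_black (Pair True) (Pair False)"

definition index_red :: "(bool \<times> nat) set set" where
  "index_red = fence_red (Pair True) (Pair False)"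

lemma fence_black_eq_image: "fence_black a b = (`) (fence_vertex a b) ` index_black"
  using fence_black_comp[of "fence_vertex a b" "Pair True" "Pair False"]
  by (simp add: fence_vertex_comp_Pair index_black_def)

lemma fence_red_eq_image: "fence_red a b = (`) (fence_vertex a b) ` index_red"
  using fence_red_comp[of "fence_vertex a b" "Pair True" "Pair False"]
  by (simp add: fence_vertex_comp_Pair index_red_def)

lemma index_black_eq: "index_black =
  {{(True, 1), (True, 2)}, {(True, 2), (True, 3)}, {(True, 3), (True, 4)},
   {(True, 4), (True, 5)}, {(True, 5), (True, 6)}, {(True, 6), (True, 1)},
   {(False, 1), (False, 2)}, {(False, 2), (False, 3)}, {(False, 3), (False, 4)},
   {(False, 4), (False, 5)}, {(False, 5), (False, 6)}, {(False, 6), (False, 1)},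
   {(False, 1), (True, 6)}}"
  unfolding index_black_def fence_black_def setcompr_eq_image Collect_mem_eq interval_1_5
  by (simp del: One_nat_def add: insert_commute)

lemma index_red_eq: "index_red =
  {{(True, 1), (False, 1)}, {(True, 2), (False, 2)}, {(True, 3), (False, 3)},
   {(True, 4), (False, 4)}, {(True, 5), (False, 5)}, {(True, 6), (False, 6)},
   {(True, 1), (False, 2)}, {(True, 2), (False, 3)}, {(True, 3), (False, 4)},
   {(True, 4), (False, 5)}, {(True, 5), (False, 6)}}"
  unfolding index_red_def fence_red_def setcompr_eq_image Collect_mem_eq interval_1_5 interval_1_6
  by (simp del: One_nat_def add: insert_commute)

lemma index_edges_subset: "index_black \<union> index_red \<subseteq> Pow (set fence_index)"
  unfolding index_black_eq index_red_eq set_fence_index by simp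

text \<open>
  For a fence vertex \<open>j\<close> merged with a vertex of \<open>S\<close>, with a vertex of \<open>X\<close>, or with a second
  fence vertex, these predicates describe the other fence vertices distinguished by the merged
  part (see the \<open>card_distinguished_by\<close> lemmas).
\<close>

lemma fence_index_count_S:
  "\<forall>j\<in>set fence_index. 5 \<le> length (filter (\<lambda>k. k \<noteq> j \<and>
     (if fst k then {j, k} \<notin> index_black else {j, k} \<in> index_black \<union> index_red)) fence_index)"
  unfolding index_black_eq index_red_eq fence_index_def by (simp add: doubleton_eq_iff)

lemma fence_index_count_X:
  "\<forall>j\<in>set fence_index. 5 \<le> length (filter (\<lambda>k. k \<noteq> j \<and> {j, k} \<notin> index_black) fence_index)"
  unfolding index_black_eq fence_index_def by (simp add: doubleton_eq_iff)

lemma fence_index_count_pair: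
  "\<forall>j1\<in>set fence_index. \<forall>j2\<in>set fence_index. j1 \<noteq> j2 \<longrightarrow>
     5 \<le> length (filter (\<lambda>k. k \<noteq> j1 \<and> k \<noteq> j2
            \<and> ({j1, k} \<in> index_black \<union> index_red \<or> {j2, k} \<in> index_black \<union> index_red)
            \<and> ({j1, k} \<notin> index_black \<or> {j2, k} \<notin> index_black)) fence_index)
        + (if fst j1 = fst j2 then 0 else 2)"
  unfolding index_black_eq index_red_eq fence_index_def by (simp add: doubleton_eq_iff)

lemma card_fence_side: "card {k \<in> set fence_index. fst k = t} = 6"
proof -
  have "card {k \<in> set fence_index. fst k = t} = length (filter (\<lambda>k. fst k = t) fence_index)"
    using distinct_length_filter[OF distinct_fence_index, of "\<lambda>k. fst k = t"]
    by (simp add: Collect_conj_eq Int_commute)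
  then show ?thesis
    by (cases t) (simp_all add: fence_index_def)
qed

locale attached_fence =
  fixes G :: "'v trigraph" and a b :: "nat \<Rightarrow> 'v" and S X Y :: "'v set"
  assumes wf: "wf_trigraph G"
    and fence: "contains_fence G a b"
    and attached: "attached G a b S"
    and rule: "attachment_rule G a b S X"
    and Y_eq: "Y = verts G - (fence_vs a b \<union> S \<union> X)"
begin

abbreviation F :: "'v set" where "F \<equiv> fence_vs a b"

abbreviation vtx :: "bool \<times> nat \<Rightarrow> 'v" where "vtx \<equiv> fence_vertex a b"

lemma finite_verts: "finite (verts G)"
  using wf by (simp add: wf_trigraph_def)

lemma fence_subset: "F \<subseteq> verts G"
  using fence by (simp add: contains_fence_def)

lemma S_subset: "S \<subseteq> verts G - F"
  using attached by (simp add: attached_def)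

lemma X_subset: "X \<subseteq> verts G - (F \<union> S)"
  using rule by (simp add: attachment_rule_def)

lemma verts_eq: "verts G = F \<union> S \<union> X \<union> Y"
  using Y_eq fence_subset S_subset X_subset by blast

lemma disjoint_classes:
  "F \<inter> S = {}" "F \<inter> X = {}" "F \<inter> Y = {}" "S \<inter> X = {}" "S \<inter> Y = {}" "X \<inter> Y = {}"
  using Y_eq S_subset X_subset by blast+

lemma fence_eq_image: "F = vtx ` set fence_index"
  by (rule fence_vs_eq_image)

lemma inj_vtx: "inj_on vtx (set fence_index)"
  by (rule inj_on_fence_vertex[OF fence])

lemma black_vtx_iff:
  assumes "j \<in> set fence_index" "k \<in> set fence_index"
  shows "{vtx j, vtx k} \<in> blk G \<longleftrightarrow> {j, k} \<in> index_black"
proof -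
  have "{vtx j, vtx k} \<subseteq> F"
    using assms fence_eq_image by blast
  then have "{vtx j, vtx k} \<in> blk G \<longleftrightarrow> {vtx j, vtx k} \<in> {e \<in> blk G. e \<subseteq> F}"
    by blast
  also have "\<dots> \<longleftrightarrow> vtx ` {j, k} \<in> (`) vtx ` index_black"
    using fence by (simp add: contains_fence_def fence_black_eq_image)
  also have "\<dots> \<longleftrightarrow> {j, k} \<in> index_black"
    by (rule inj_on_image_mem_iff[OF inj_on_image_Pow[OF inj_vtx]])
      (use assms index_edges_subset in auto)
  finally show ?thesis .
qed

lemma adj_vtx_iff:
  assumes "j \<in> set fence_index" "k \<in> set fence_index"
  shows "adj G (vtx j) (vtx k) \<longleftrightarrow> {j, k} \<in> index_black \<union> index_red"
proof -
  have "{vtx j, vtx k} \<subseteq> F"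
    using assms fence_eq_image by blast
  then have "{vtx j, vtx k} \<in> red G \<longleftrightarrow> {vtx j, vtx k} \<in> {e \<in> red G. e \<subseteq> F}"
    by blast
  also have "\<dots> \<longleftrightarrow> vtx ` {j, k} \<in> (`) vtx ` index_red"
    using fence by (simp add: contains_fence_def fence_red_eq_image)
  also have "\<dots> \<longleftrightarrow> {j, k} \<in> index_red"
    by (rule inj_on_image_mem_iff[OF inj_on_image_Pow[OF inj_vtx]])
      (use assms index_edges_subset in auto)
  finally show ?thesis
    using black_vtx_iff[OF assms] by (simp add: adj_def)
qed

lemma S_black_a_side:
  assumes "s \<in> S" "k \<in> set fence_index" "fst k"
  shows "{s, vtx k} \<in> blk G"
proof -
  have "{a (snd k), s} \<in> blk G"
    using attached assms(1,2) by (auto simp: attached_def set_fence_index)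
  then show ?thesis
    using assms(3) by (simp add: fence_vertex_def insert_commute)
qed

lemma S_nonadj_b_side:
  assumes "s \<in> S" "k \<in> set fence_index" "\<not> fst k"
  shows "\<not> adj G s (vtx k)"
proof -
  have "\<not> adj G (b (snd k)) s"
    using attached assms(1,2) by (auto simp: attached_def set_fence_index)
  then show ?thesis
    using assms(3) by (simp add: fence_vertex_def adj_commute)
qed

lemma X_black_fence:
  assumes "x \<in> X" "f \<in> F"
  shows "{x, f} \<in> blk G"
proof -
  have "{f, x} \<in> blk G"
    using rule assms unfolding attachment_rule_def fence_vs_def by blast
  then show ?thesis
    by (simp add: insert_commute)
qed

lemma Y_nonadj_fence:
  assumes "y \<in> Y" "f \<in> F"
  shows "\<not> adj G y f"
proof -
  have "y \<in> verts G" "y \<notin> F \<union> S \<union> X"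
    using assms(1) Y_eq by blast+
  moreover have "neighbours G f - F \<subseteq> X \<union> S"
    using rule assms(2) unfolding attachment_rule_def fence_vs_def by blast
  ultimately show ?thesis
    unfolding neighbours_def by (auto simp: adj_commute)
qed

lemma card_fence_filter:
  assumes "J \<subseteq> set fence_index"
  shows "card {g \<in> F - vtx ` J. P g} = length (filter (\<lambda>k. k \<notin> J \<and> P (vtx k)) fence_index)"
proof -
  have diff: "F - vtx ` J = vtx ` (set fence_index - J)"
    unfolding fence_eq_image using inj_on_image_set_diff[OF inj_vtx _ assms] by simp
  have "{g \<in> F - vtx ` J. P g} = vtx ` {k \<in> set fence_index - J. P (vtx k)}"
    unfolding diff by blast
  also have "card \<dots> = card {k \<in> set fence_index - J. P (vtx k)}"
    by (rule card_image) (rule inj_on_subset[OF inj_vtx], blast)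
  also have "\<dots> = length (filter (\<lambda>k. k \<notin> J \<and> P (vtx k)) fence_index)"
    unfolding distinct_length_filter[OF distinct_fence_index]
    by (rule arg_cong[where f = card]) blast
  finally show ?thesis .
qed

lemma card_fence_distinguished:
  assumes J: "J \<subseteq> set fence_index" "D = vtx ` J"
    and Q: "\<And>k. k \<in> set fence_index \<Longrightarrow> k \<notin> J \<Longrightarrow> distinguishes G W (vtx k) \<longleftrightarrow> Q k"
  shows "card {g \<in> F - D. distinguishes G W g} = length (filter (\<lambda>k. k \<notin> J \<and> Q k) fence_index)"
  unfolding J(2) card_fence_filter[OF J(1)]
  by (rule arg_cong[where f = length], rule filter_cong) (use Q in auto)

lemma card_distinguished_by_fence_and_S:
  assumes "f \<in> F" "s \<in> S"
  shows "5 \<le> card {g \<in> F - {f}. distinguishes G {f, s} g}"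
proof -
  obtain j where j: "j \<in> set fence_index" "f = vtx j"
    using assms(1) fence_eq_image by blast
  have "distinguishes G {f, s} (vtx k) \<longleftrightarrow>
      (if fst k then {j, k} \<notin> index_black else {j, k} \<in> index_black \<union> index_red)"
    if k: "k \<in> set fence_index" for k
  proof (cases "fst k")
    case True
    then have "adj G s (vtx k)" "{s, vtx k} \<in> blk G"
      using S_black_a_side[OF assms(2) k] by (simp_all add: adj_def)
    then show ?thesis
      using True black_vtx_iff[OF j(1) k] by (simp add: distinguishes_doubleton j(2))
  next
    case False
    then have "\<not> adj G s (vtx k)" "{s, vtx k} \<notin> blk G"
      using S_nonadj_b_side[OF assms(2) k] by (simp_all add: adj_def)
    then show ?thesis
      using False adj_vtx_iff[OF j(1) k] by (simp add: distinguishes_doubleton j(2))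
  qed
  then have "card {g \<in> F - {f}. distinguishes G {f, s} g} = length (filter (\<lambda>k. k \<notin> {j} \<and>
      (if fst k then {j, k} \<notin> index_black else {j, k} \<in> index_black \<union> index_red)) fence_index)"
    using card_fence_distinguished[of "{j}" "{f}"] j by simp
  then show ?thesis
    using fence_index_count_S j(1) by simp
qed

lemma card_distinguished_by_fence_and_X:
  assumes "f \<in> F" "x \<in> X"
  shows "5 \<le> card {g \<in> F - {f}. distinguishes G {f, x} g}"
proof -
  obtain j where j: "j \<in> set fence_index" "f = vtx j"
    using assms(1) fence_eq_image by blast
  have "distinguishes G {f, x} (vtx k) \<longleftrightarrow> {j, k} \<notin> index_black" if k: "k \<in> set fence_index" for k
  proof -
    have "{x, vtx k} \<in> blk G"
      using X_black_fence[OF assms(2)] k fence_eq_image by blast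
    then have "adj G x (vtx k)" "{x, vtx k} \<in> blk G"
      by (simp_all add: adj_def)
    then show ?thesis
      using black_vtx_iff[OF j(1) k] by (simp add: distinguishes_doubleton j(2))
  qed
  then have "card {g \<in> F - {f}. distinguishes G {f, x} g} =
      length (filter (\<lambda>k. k \<notin> {j} \<and> {j, k} \<notin> index_black) fence_index)"
    using card_fence_distinguished[of "{j}" "{f}"] j by simp
  then show ?thesis
    using fence_index_count_X j(1) by simp
qed

lemma card_distinguished_by_two_fence:
  assumes j: "j1 \<in> set fence_index" "j2 \<in> set fence_index" "j1 \<noteq> j2"
  shows "5 \<le> card {g \<in> F - {vtx j1, vtx j2}. distinguishes G {vtx j1, vtx j2} g}
              + (if fst j1 = fst j2 then 0 else 2)"
proof -
  have "card {g \<in> F - {vtx j1, vtx j2}. distinguishes G {vtx j1, vtx j2} g} =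
      length (filter (\<lambda>k. k \<notin> {j1, j2}
        \<and> ({j1, k} \<in> index_black \<union> index_red \<or> {j2, k} \<in> index_black \<union> index_red)
        \<and> ({j1, k} \<notin> index_black \<or> {j2, k} \<notin> index_black)) fence_index)"
    by (rule card_fence_distinguished[of "{j1, j2}"])
      (use j in \<open>auto simp: distinguishes_doubleton adj_vtx_iff black_vtx_iff\<close>)
  then show ?thesis
    using fence_index_count_pair j by simp
qed

subsection \<open>Tame parts\<close>

definition tame :: "'v set \<Rightarrow> bool" where
  "tame P \<longleftrightarrow> P \<subseteq> S \<or> P \<subseteq> X \<or> (\<exists>f\<in>F. P \<subseteq> insert f Y)"

lemma tame_if_subset_Y: "P \<subseteq> Y \<Longrightarrow> tame P"
proof -
  assume "P \<subseteq> Y"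
  moreover have "vtx (True, 1) \<in> F"
    by (simp add: fence_eq_image fence_index_def)
  ultimately show "tame P"
    unfolding tame_def by blast
qed

lemma tame_singleton: "x \<in> verts G \<Longrightarrow> tame {x}"
  using verts_eq tame_if_subset_Y[of "{x}"] unfolding tame_def by blast

lemma tame_fence_unique: "tame P \<Longrightarrow> f \<in> P \<inter> F \<Longrightarrow> g \<in> P \<inter> F \<Longrightarrow> f = g"
  unfolding tame_def using disjoint_classes by blast

lemma tame_fence: "tame P \<Longrightarrow> f \<in> P \<inter> F \<Longrightarrow> P \<subseteq> insert f Y"
  unfolding tame_def using disjoint_classes by blast

lemma tame_S: "tame P \<Longrightarrow> s \<in> P \<inter> S \<Longrightarrow> P \<subseteq> S"
  unfolding tame_def using disjoint_classes by blast

lemma tame_not_split_S: "tame P \<Longrightarrow> \<not> (P \<inter> S \<noteq> {} \<and> P \<inter> (verts G - S) \<noteq> {})"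
  using tame_S by blast

lemma tame_not_split_XY: "tame P \<Longrightarrow> \<not> (P \<inter> X \<noteq> {} \<and> P \<inter> Y \<noteq> {})"
  unfolding tame_def using disjoint_classes by blast

lemma card_le_red_deg_tame:
  assumes part: "partition_on (verts G) \<P>" and W: "W \<in> \<P>"
    and tame: "\<And>P. P \<in> \<P> \<Longrightarrow> P \<noteq> W \<Longrightarrow> tame P"
    and Z: "Z \<subseteq> (F \<union> S) - W" "\<And>z. z \<in> Z \<Longrightarrow> distinguishes G W z"
    and S_sep: "\<And>P s s'. P \<in> \<P> \<Longrightarrow> s \<in> Z \<inter> S \<Longrightarrow> s' \<in> Z \<inter> S \<Longrightarrow> s \<in> P \<Longrightarrow> s' \<in> P \<Longrightarrow> s = s'"
  shows "card Z \<le> red_deg (quotient_trigraph G \<P>) W"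
proof (rule card_distinguished_le_red_deg[OF part finite_verts W _ Z(2)])
  show "Z \<subseteq> verts G - W"
    using Z(1) fence_subset S_subset by blast
next
  fix P z z' assume P: "P \<in> \<P>" and z: "z \<in> Z" "z' \<in> Z" "z \<in> P" "z' \<in> P"
  then have "tame P"
    using tame Z(1) by blast
  then show "z = z'"
    using z Z(1) S_sep[OF P] tame_fence_unique tame_S disjoint_classes(1) by blast
qed

lemma fence_side_distinguished:
  assumes "W \<subseteq> S \<union> X \<union> Y" "\<not> W \<subseteq> S" "\<not> W \<subseteq> X" "\<not> W \<subseteq> Y"
  obtains t where "\<And>k. k \<in> set fence_index \<Longrightarrow> fst k = t \<Longrightarrow> distinguishes G W (vtx k)"
proof -
  consider s x where "s \<in> W \<inter> S" "x \<in> W \<inter> X" | s y where "s \<in> W \<inter> S" "y \<in> W \<inter> Y"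
    | x y where "x \<in> W \<inter> X" "y \<in> W \<inter> Y"
    using assms by blast
  then show thesis
  proof cases
    case 1
    show thesis
    proof (rule that[of False])
      fix k assume "k \<in> set fence_index" "fst k = False"
      then show "distinguishes G W (vtx k)"
        using 1 X_black_fence[of x "vtx k"] S_nonadj_b_side[of s k] fence_eq_image
        by (intro distinguishesI[where p = x and q = s]) (auto simp: adj_def)
    qed
  next
    case 2
    show thesis
    proof (rule that[of True])
      fix k assume "k \<in> set fence_index" "fst k = True"
      then show "distinguishes G W (vtx k)"
        using 2 S_black_a_side[of s k] Y_nonadj_fence[of y "vtx k"] fence_eq_image
        by (intro distinguishesI[where p = s and q = y]) (auto simp: adj_def)
    qed
  next
    case 3
    show thesis
    proof (rule that[of True])
      fix k assume "k \<in> set fence_index" "fst k = True"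
      then show "distinguishes G W (vtx k)"
        using 3 X_black_fence[of x "vtx k"] Y_nonadj_fence[of y "vtx k"] fence_eq_image
        by (intro distinguishesI[where p = x and q = y]) (auto simp: adj_def)
    qed
  qed
qed

lemma red_deg_ge_6_if_mixed_without_fence:
  assumes part: "partition_on (verts G) \<P>" and W: "W \<in> \<P>"
    and tame: "\<And>P. P \<in> \<P> \<Longrightarrow> P \<noteq> W \<Longrightarrow> tame P"
    and no_fence: "W \<inter> F = {}" and mixed: "\<not> W \<subseteq> S" "\<not> W \<subseteq> X" "\<not> W \<subseteq> Y"
  shows "6 \<le> red_deg (quotient_trigraph G \<P>) W"
proof -
  have "W \<subseteq> S \<union> X \<union> Y"
    using W no_fence partition_onD1[OF part] verts_eq by blast
  then obtain t where side: "\<And>k. k \<in> set fence_index \<Longrightarrow> fst k = t \<Longrightarrow> distinguishes G W (vtx k)"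
    using fence_side_distinguished[OF _ mixed] by blast
  let ?Z = "vtx ` {k \<in> set fence_index. fst k = t}"
  have "6 = card ?Z"
    using card_fence_side[of t] card_image[OF inj_on_subset[OF inj_vtx]] by simp
  also have "card ?Z \<le> red_deg (quotient_trigraph G \<P>) W"
  proof (rule card_le_red_deg_tame[OF part W tame])
    show "?Z \<subseteq> F \<union> S - W"
      using no_fence fence_eq_image by blast
    show "\<And>z. z \<in> ?Z \<Longrightarrow> distinguishes G W z"
      using side by blast
    show "\<And>P s s'. s \<in> ?Z \<inter> S \<Longrightarrow> s = s'"
      using disjoint_classes(1) fence_eq_image by blast
  qed
  finally show ?thesis .
qed

lemma red_deg_ge_5_if_fence_and_S_or_X:
  assumes part: "partition_on (verts G) \<P>" and W: "W \<in> \<P>"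
    and tame: "\<And>P. P \<in> \<P> \<Longrightarrow> P \<noteq> W \<Longrightarrow> tame P"
    and fence_W: "W \<inter> F = {f}" and z: "z \<in> W" "z \<in> S \<union> X"
  shows "5 \<le> red_deg (quotient_trigraph G \<P>) W"
proof -
  let ?Z = "{g \<in> F - {f}. distinguishes G {f, z} g}"
  have "f \<in> F" "{f, z} \<subseteq> W"
    using fence_W z(1) by blast+
  from z(2) have "5 \<le> card ?Z"
  proof
    assume "z \<in> S"
    then show ?thesis by (rule card_distinguished_by_fence_and_S[OF \<open>f \<in> F\<close>])
  next
    assume "z \<in> X"
    then show ?thesis by (rule card_distinguished_by_fence_and_X[OF \<open>f \<in> F\<close>])
  qed
  also have "card ?Z \<le> red_deg (quotient_trigraph G \<P>) W"
  proof (rule card_le_red_deg_tame[OF part W tame])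
    show "?Z \<subseteq> F \<union> S - W"
      using fence_W by blast
    show "\<And>z'. z' \<in> ?Z \<Longrightarrow> distinguishes G W z'"
      using distinguishes_mono[OF _ \<open>{f, z} \<subseteq> W\<close>] by blast
    show "\<And>P s s'. s \<in> ?Z \<inter> S \<Longrightarrow> s = s'"
      using disjoint_classes(1) by blast
  qed
  finally show ?thesis .
qed

lemma S_distinguished_by_opposite_fence:
  assumes j: "j1 \<in> set fence_index" "j2 \<in> set fence_index" "fst j1" "\<not> fst j2" and s: "s \<in> S"
  shows "distinguishes G {vtx j1, vtx j2} s"
proof (rule distinguishesI[where p = "vtx j1" and q = "vtx j2"])
  show "adj G (vtx j1) s"
    using S_black_a_side[OF s j(1,3)] by (simp add: adj_def insert_commute)
  show "\<not> adj G (vtx j2) s \<or> {vtx j2, s} \<notin> blk G"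
    using S_nonadj_b_side[OF s j(2,4)] by (simp add: adj_commute)
qed simp_all

lemma card_add_2_le_red_deg_if_S_split:
  assumes part: "partition_on (verts G) \<P>" and W: "W \<in> \<P>"
    and tame: "\<And>P. P \<in> \<P> \<Longrightarrow> P \<noteq> W \<Longrightarrow> tame P"
    and Z: "Z \<subseteq> F - W" "\<And>z. z \<in> Z \<Longrightarrow> distinguishes G W z"
    and S: "W \<inter> S = {}" "\<And>s. s \<in> S \<Longrightarrow> distinguishes G W s"
    and split: "\<not> (\<exists>P\<in>\<P>. S \<subseteq> P)"
  shows "card Z + 2 \<le> red_deg (quotient_trigraph G \<P>) W"
proof -
  obtain s1 s2 where s: "s1 \<in> S" "s2 \<in> S" and apart: "\<And>P. P \<in> \<P> \<Longrightarrow> s1 \<in> P \<Longrightarrow> s2 \<notin> P"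
    using partition_on_split_witnesses[OF part _ _ split] S_subset attached
    unfolding attached_def by blast
  have "s1 \<noteq> s2"
    using apart s(1) S_subset partition_onD1[OF part] by blast
  moreover have "finite Z"
    using Z(1) by (rule finite_subset) (simp add: fence_eq_image)
  moreover have "Z \<inter> {s1, s2} = {}"
    using Z(1) s disjoint_classes(1) by blast
  ultimately have "card Z + 2 = card (Z \<union> {s1, s2})"
    by (simp add: card_Un_disjoint)
  also have "\<dots> \<le> red_deg (quotient_trigraph G \<P>) W"
  proof (rule card_le_red_deg_tame[OF part W tame])
    show "Z \<union> {s1, s2} \<subseteq> F \<union> S - W"
      using Z(1) s S(1) by blast
    show "\<And>z. z \<in> Z \<union> {s1, s2} \<Longrightarrow> distinguishes G W z"
      using Z(2) S(2) s by blast
    show "\<And>P s s'. P \<in> \<P> \<Longrightarrow> s \<in> (Z \<union> {s1, s2}) \<inter> S \<Longrightarrow> s' \<in> (Z \<union> {s1, s2}) \<inter> S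
        \<Longrightarrow> s \<in> P \<Longrightarrow> s' \<in> P \<Longrightarrow> s = s'"
      using apart Z(1) disjoint_classes(1) by blast
  qed
  finally show ?thesis .
qed

lemma red_deg_ge_5_if_two_fence:
  assumes part: "partition_on (verts G) \<P>" and W: "W \<in> \<P>"
    and tame: "\<And>P. P \<in> \<P> \<Longrightarrow> P \<noteq> W \<Longrightarrow> tame P"
    and fence_W: "W \<inter> F = {f1, f2}" "f1 \<noteq> f2" and no_S: "W \<inter> S = {}"
    and split: "\<not> (\<exists>P\<in>\<P>. S \<subseteq> P)"
  shows "5 \<le> red_deg (quotient_trigraph G \<P>) W"
proof -
  obtain j1 j2 where j: "j1 \<in> set fence_index" "j2 \<in> set fence_index" "f1 = vtx j1" "f2 = vtx j2"
    using fence_W(1) fence_eq_image by blast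
  let ?Z = "{g \<in> F - {f1, f2}. distinguishes G {f1, f2} g}"
  have "j1 \<noteq> j2"
    using j fence_W(2) by blast
  then have count: "5 \<le> card ?Z + (if fst j1 = fst j2 then 0 else 2)"
    using card_distinguished_by_two_fence[OF j(1,2)] unfolding j(3,4) by blast
  have Z: "?Z \<subseteq> F - W" "\<And>z. z \<in> ?Z \<Longrightarrow> distinguishes G W z"
    using fence_W(1) distinguishes_mono[of G "{f1, f2}" _ W] by blast+
  show ?thesis
  proof (cases "fst j1 = fst j2")
    case True
    have "card ?Z \<le> red_deg (quotient_trigraph G \<P>) W"
      by (rule card_le_red_deg_tame[OF part W tame]) (use Z disjoint_classes(1) in auto)
    with count True show ?thesis
      by simp
  next
    case False
    have "distinguishes G W s" if "s \<in> S" for s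
      using False S_distinguished_by_opposite_fence[OF j(1,2) _ _ that]
        S_distinguished_by_opposite_fence[OF j(2,1) _ _ that]
        distinguishes_mono[of G "{f1, f2}" s W] fence_W(1)
      by (cases "fst j1") (auto simp: j(3,4) insert_commute)
    with count False show ?thesis
      using card_add_2_le_red_deg_if_S_split[OF part W tame Z no_S _ split] by simp
  qed
qed

lemma tame_Un_two_fence:
  assumes tame: "tame u" "tame v" and f: "f1 \<in> (u \<union> v) \<inter> F" "f2 \<in> (u \<union> v) \<inter> F" "f1 \<noteq> f2"
  shows "u \<union> v \<subseteq> {f1, f2} \<union> Y"
proof (cases "f1 \<in> u")
  case True
  then have "f2 \<in> v"
    using f tame_fence_unique[OF tame(1)] by blast
  then show ?thesis
    using True f tame_fence[OF tame(1), of f1] tame_fence[OF tame(2), of f2] by blast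
next
  case False
  then have "f1 \<in> v" "f2 \<in> u"
    using f tame_fence_unique[OF tame(2)] by blast+
  then show ?thesis
    using f tame_fence[OF tame(1), of f2] tame_fence[OF tame(2), of f1] by blast
qed

lemma red_deg_ge_5_if_untame:
  assumes part: "partition_on (verts G) \<P>" and W: "W \<in> \<P>"
    and tame: "\<And>P. P \<in> \<P> \<Longrightarrow> P \<noteq> W \<Longrightarrow> tame P"
    and W_eq: "W = u \<union> v" and tame_uv: "tame u" "tame v" and untame: "\<not> tame W"
    and split: "\<not> (\<exists>P\<in>\<P>. S \<subseteq> P)"
  shows "5 \<le> red_deg (quotient_trigraph G \<P>) W"
proof (cases "W \<inter> F = {}")
  case True
  moreover have "\<not> W \<subseteq> S" "\<not> W \<subseteq> X" "\<not> W \<subseteq> Y"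
    using untame tame_if_subset_Y unfolding tame_def by blast+
  ultimately show ?thesis
    using red_deg_ge_6_if_mixed_without_fence[OF part W tame] by simp
next
  case False
  then obtain f where f: "f \<in> W" "f \<in> F"
    by blast
  show ?thesis
  proof (cases "W \<inter> F = {f}")
    case True
    have "\<not> W \<subseteq> insert f Y"
      using untame f(2) unfolding tame_def by blast
    then obtain z where z: "z \<in> W" "z \<notin> insert f Y"
      by blast
    then have "z \<in> S \<union> X"
      using True W partition_onD1[OF part] verts_eq by blast
    with z(1) show ?thesis
      using red_deg_ge_5_if_fence_and_S_or_X[OF part W _ True] tame by simp
  next
    case False
    then obtain g where g: "g \<in> W" "g \<in> F" "g \<noteq> f"
      using f by blast
    have "W \<subseteq> {f, g} \<union> Y"
      using tame_Un_two_fence[OF tame_uv] f g unfolding W_eq by blast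
    then have "W \<inter> F = {f, g}" "W \<inter> S = {}"
      using f g disjoint_classes by blast+
    then show ?thesis
      using red_deg_ge_5_if_two_fence[OF part W tame _ g(3)[symmetric] _ split] by blast
  qed
qed

lemma tame_merge:
  assumes part: "partition_on (verts G) \<P>" and uv: "u \<in> \<P>" "v \<in> \<P>" "u \<noteq> v"
    and tame: "\<And>P. P \<in> \<P> \<Longrightarrow> tame P"
    and split: "\<not> (\<exists>P \<in> \<P> - {u, v} \<union> {u \<union> v}. S \<subseteq> P)"
    and deg: "red_deg (quotient_trigraph G (\<P> - {u, v} \<union> {u \<union> v})) (u \<union> v) \<le> 4"
  shows "tame (u \<union> v)"
proof (rule ccontr)
  assume untame: "\<not> tame (u \<union> v)"
  have tame': "tame P" if "P \<in> \<P> - {u, v} \<union> {u \<union> v}" "P \<noteq> u \<union> v" for P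
    using that tame by blast
  have "5 \<le> red_deg (quotient_trigraph G (\<P> - {u, v} \<union> {u \<union> v})) (u \<union> v)"
    by (rule red_deg_ge_5_if_untame[OF partition_on_merge[OF part uv] _ tame' refl
          tame[OF uv(1)] tame[OF uv(2)] untame split]) simp
  with deg show False
    by simp
qed

lemma tame_along_partial_seq:
  assumes seq: "partial_seq 4 G Gs" and i: "i < length Gs"
    and split: "\<not> (\<exists>P\<in>verts (Gs ! i). S \<subseteq> P)"
  shows "\<forall>P\<in>verts (Gs ! i). tame P"
  using i split
proof (induction i)
  case 0
  then show ?case
    using partial_seq_hd[OF seq] tame_singleton by (auto simp: lift_def)
next
  case (Suc i)
  obtain \<P> where part: "partition_on (verts G) \<P>" and Gi: "Gs ! i = quotient_trigraph G \<P>"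
    using partial_seq_quotient_trigraph[OF wf seq] Suc.prems(1) by (meson Suc_lessD)
  obtain u v where uv: "u \<in> \<P>" "v \<in> \<P>" "u \<noteq> v"
    and GSi: "Gs ! Suc i = quotient_trigraph G (\<P> - {u, v} \<union> {u \<union> v})"
    using partial_seq_step[OF seq Suc.prems(1) part Gi] .
  have split': "\<not> (\<exists>P \<in> \<P> - {u, v} \<union> {u \<union> v}. S \<subseteq> P)"
    using Suc.prems(2) GSi by simp
  then have "\<not> (\<exists>P\<in>verts (Gs ! i). S \<subseteq> P)"
    unfolding Gi by auto
  then have tame: "tame P" if "P \<in> \<P>" for P
    using that Suc.IH Suc.prems(1) Gi by simp
  have "max_red_deg_le (Gs ! Suc i) 4"
    using seq Suc.prems(1) unfolding partial_seq_def by simp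
  then have "red_deg (quotient_trigraph G (\<P> - {u, v} \<union> {u \<union> v})) (u \<union> v) \<le> 4"
    unfolding GSi max_red_deg_le_def by simp
  then have "tame (u \<union> v)"
    using tame_merge[OF part uv _ split'] tame by simp
  then show ?case
    using tame GSi by auto
qed

end

theorem lemma4p9:
  fixes G :: "'v trigraph" and a b :: "nat \<Rightarrow> 'v" and S X Y :: "'v set"
    and Gs :: "'v set trigraph list" and G' :: "'v set trigraph"
  assumes "wf_trigraph G"
    and "contains_fence G a b"
    and "attached G a b S"
    and "attachment_rule G a b S X"
    and "Y = verts G - (fence_vs a b \<union> S \<union> X)"
    and "partial_seq 4 G Gs"
    and "G' \<in> set Gs"
    and "\<not> (\<exists>P \<in> verts G'. S \<subseteq> P)"
  shows "(\<forall>P \<in> verts G'. \<not> (P \<inter> S \<noteq> {} \<and> P \<inter> (verts G - S) \<noteq> {}))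
       \<and> (\<forall>P \<in> verts G'. \<not> (P \<inter> X \<noteq> {} \<and> P \<inter> Y \<noteq> {}))"
proof -
  interpret attached_fence G a b S X Y
    using assms(1-5) by unfold_locales
  obtain i where "i < length Gs" "G' = Gs ! i"
    using assms(7) by (auto simp: in_set_conv_nth)
  then have "\<forall>P\<in>verts G'. tame P"
    using tame_along_partial_seq assms(6,8) by blast
  then show ?thesis
    using tame_not_split_S tame_not_split_XY by blast
qed

end
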